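(* Let $(M,g,J_{TM})$ be an almost para-Hermitian manifold and let $(E,J_E)$ be a para-Hermitian algebroid over $M$. If $E$ admits a flat para-complex connection $A:TM\to E$, then $M$ is a para-Hermitian manifold, i.e. both eigenbundles $T^+M$ and $T^-M$ of $J_{TM}$ are closed under the Lie bracket.
   Context: A Courant algebroid $(E,\rho,\langle\cdot,\cdot\rangle,[\cdot,\cdot])$ over $M$ is a vector bundle with a non-degenerate symmetric pairing, a skew-symmetric bracket on sections and an anchor $\rho:E\to TM$ satisfying the usual Courant algebroid axioms (in particular $\rho([e_1,e_2])=[\rho e_1,\rho e_2]$). An almost para-Hermitian algebroid is a Courant algebroid with $J_E\in\Gamma(\mathrm{End}(E))$, $J_E^2=\mathrm{Id}$, equal-rank eigenbundles $E_\pm$, and $\langle J_E\cdot,J_E\cdot\rangle=-\langle\cdot,\cdot\rangle$; it is a para-Hermitian algebroid if $\Gamma(E_+)$ and $\Gamma(E_-)$ are both closed under the Courant bracket. An almost para-Hermitian manifold $(M,g,J_{TM})$ has a split-signature metric $g$, $J_{TM}^2=\mathrm{Id}$ with equal-rank eigenbundles $T^\pm M$, and $g(J_{TM}\cdot,J_{TM}\cdot)=-g$. A connection is a bundle map $A:TM\to E$ with $\rho\circ A=\mathrm{Id}_{TM}$ and $\langle A(v),A(w)\rangle=0$; flat means $[A(v),A(w)]=A([v,w])$ for all vector fields; para-complex means $J_E\circ A=A\circ J_{TM}$. *)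

theory Defs
  imports Main
begin

text \<open>
  Algebraic (section-level) model of the geometric data.  There is no theory of smooth
  manifolds / vector bundles in the available libraries, so we work on the level of
  global sections:
   - 'f : the ring C^infinity(M) of smooth functions,
   - 'x : the C^infinity(M)-module of vector fields Gamma(TM), with the action of vector
          fields on functions (derivations) and the Lie bracket,
   - 'e : the C^infinity(M)-module of sections Gamma(E).
  Bundle maps are C^infinity(M)-linear maps of section modules.
\<close>

definition module_over :: "('f::comm_ring_1 \<Rightarrow> 'v::ab_group_add \<Rightarrow> 'v) \<Rightarrow> bool" where
  "module_over sm \<longleftrightarrow>
     (\<forall>a b v. sm (a + b) v = sm a v + sm b v) \<and>
     (\<forall>a v w. sm a (v + w) = sm a v + sm a w) \<and>
     (\<forall>a b v. sm (a * b) v = sm a (sm b v)) \<and>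
     (\<forall>v. sm 1 v = v)"

definition fun_linear ::
  "('f::comm_ring_1 \<Rightarrow> 'v::ab_group_add \<Rightarrow> 'v) \<Rightarrow> ('f \<Rightarrow> 'w::ab_group_add \<Rightarrow> 'w) \<Rightarrow> ('v \<Rightarrow> 'w) \<Rightarrow> bool" where
  "fun_linear smV smW L \<longleftrightarrow>
     (\<forall>v w. L (v + w) = L v + L w) \<and> (\<forall>a v. L (smV a v) = smW a (L v))"

definition sym_nondeg_form ::
  "('f::comm_ring_1 \<Rightarrow> 'v::ab_group_add \<Rightarrow> 'v) \<Rightarrow> ('v \<Rightarrow> 'v \<Rightarrow> 'f) \<Rightarrow> bool" where
  "sym_nondeg_form sm B \<longleftrightarrow>
     (\<forall>v w. B v w = B w v) \<and>
     (\<forall>u v w. B (u + v) w = B u w + B v w) \<and>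
     (\<forall>a v w. B (sm a v) w = a * B v w) \<and>
     (\<forall>v. (\<forall>w. B v w = 0) \<longrightarrow> v = 0)"

definition vector_fields ::
  "('f::comm_ring_1 \<Rightarrow> 'x::ab_group_add \<Rightarrow> 'x) \<Rightarrow> ('x \<Rightarrow> 'f \<Rightarrow> 'f) \<Rightarrow> ('x \<Rightarrow> 'x \<Rightarrow> 'x) \<Rightarrow> bool" where
  "vector_fields smX act lie \<longleftrightarrow>
     (\<exists>h::'f. 2 * h = 1) \<and>
     module_over smX \<and>
     (\<forall>X Y f. act (X + Y) f = act X f + act Y f) \<and>
     (\<forall>a X f. act (smX a X) f = a * act X f) \<and>
     (\<forall>X f g. act X (f + g) = act X f + act X g) \<and>
     (\<forall>X f g. act X (f * g) = act X f * g + f * act X g) \<and>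
     (\<forall>X Y. lie X Y = - lie Y X) \<and>
     (\<forall>X Y Z. lie (X + Y) Z = lie X Z + lie Y Z) \<and>
     (\<forall>X Y Z. lie X (lie Y Z) + lie Y (lie Z X) + lie Z (lie X Y) = 0) \<and>
     (\<forall>X Y a. lie X (smX a Y) = smX a (lie X Y) + smX (act X a) Y) \<and>
     (\<forall>X Y f. act (lie X Y) f = act X (act Y f) - act Y (act X f))"

text \<open>Almost para-Hermitian manifold (M, g, J_TM).  Equal rank of the eigenbundles and
  split signature of g follow from J^2 = Id and g(J.,J.) = -g (eigenbundles isotropic).\<close>
definition almost_para_hermitian_manifold ::
  "('f::comm_ring_1 \<Rightarrow> 'x::ab_group_add \<Rightarrow> 'x) \<Rightarrow> ('x \<Rightarrow> 'f \<Rightarrow> 'f) \<Rightarrow> ('x \<Rightarrow> 'x \<Rightarrow> 'x)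
     \<Rightarrow> ('x \<Rightarrow> 'x \<Rightarrow> 'f) \<Rightarrow> ('x \<Rightarrow> 'x) \<Rightarrow> bool" where
  "almost_para_hermitian_manifold smX act lie g J \<longleftrightarrow>
     vector_fields smX act lie \<and>
     sym_nondeg_form smX g \<and>
     fun_linear smX smX J \<and>
     (\<forall>X. J (J X) = X) \<and>
     (\<forall>X Y. g (J X) (J Y) = - g X Y)"

definition para_hermitian_manifold ::
  "('f::comm_ring_1 \<Rightarrow> 'x::ab_group_add \<Rightarrow> 'x) \<Rightarrow> ('x \<Rightarrow> 'f \<Rightarrow> 'f) \<Rightarrow> ('x \<Rightarrow> 'x \<Rightarrow> 'x)
     \<Rightarrow> ('x \<Rightarrow> 'x \<Rightarrow> 'f) \<Rightarrow> ('x \<Rightarrow> 'x) \<Rightarrow> bool" where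
  "para_hermitian_manifold smX act lie g J \<longleftrightarrow>
     almost_para_hermitian_manifold smX act lie g J \<and>
     (\<forall>X Y. J X = X \<and> J Y = Y \<longrightarrow> J (lie X Y) = lie X Y) \<and>
     (\<forall>X Y. J X = - X \<and> J Y = - Y \<longrightarrow> J (lie X Y) = - lie X Y)"

text \<open>Courant algebroid (Liu-Weinstein-Xu, skew-symmetric bracket).  D : C^infinity(M) \<rightarrow> Gamma(E)
  is determined by 2 <D f, e> = rho(e) f.\<close>
definition courant_algebroid ::
  "('f::comm_ring_1 \<Rightarrow> 'x::ab_group_add \<Rightarrow> 'x) \<Rightarrow> ('x \<Rightarrow> 'f \<Rightarrow> 'f) \<Rightarrow> ('x \<Rightarrow> 'x \<Rightarrow> 'x)
    \<Rightarrow> ('f \<Rightarrow> 'e::ab_group_add \<Rightarrow> 'e) \<Rightarrow> ('e \<Rightarrow> 'e \<Rightarrow> 'f) \<Rightarrow> ('e \<Rightarrow> 'x) \<Rightarrow> ('e \<Rightarrow> 'e \<Rightarrow> 'e)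
    \<Rightarrow> ('f \<Rightarrow> 'e) \<Rightarrow> bool" where
  "courant_algebroid smX act lie smE ip rho cb D \<longleftrightarrow>
     vector_fields smX act lie \<and>
     module_over smE \<and>
     sym_nondeg_form smE ip \<and>
     fun_linear smE smX rho \<and>
     (\<forall>f e. 2 * ip (D f) e = act (rho e) f) \<and>
     (\<forall>e1 e2. cb e1 e2 = - cb e2 e1) \<and>
     (\<forall>e1 e2 e3. cb (e1 + e2) e3 = cb e1 e3 + cb e2 e3) \<and>
     (\<forall>e1 e2 e3.
        smE 3 (cb (cb e1 e2) e3 + cb (cb e2 e3) e1 + cb (cb e3 e1) e2)
        = D (ip (cb e1 e2) e3 + ip (cb e2 e3) e1 + ip (cb e3 e1) e2)) \<and>
     (\<forall>e1 e2. rho (cb e1 e2) = lie (rho e1) (rho e2)) \<and>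
     (\<forall>e1 e2 f. cb e1 (smE f e2) = smE f (cb e1 e2) + smE (act (rho e1) f) e2 - smE (ip e1 e2) (D f)) \<and>
     (\<forall>f. rho (D f) = 0) \<and>
     (\<forall>e h1 h2. act (rho e) (ip h1 h2)
        = ip (cb e h1 + D (ip e h1)) h2 + ip h1 (cb e h2 + D (ip e h2)))"

definition para_hermitian_algebroid ::
  "('f::comm_ring_1 \<Rightarrow> 'x::ab_group_add \<Rightarrow> 'x) \<Rightarrow> ('x \<Rightarrow> 'f \<Rightarrow> 'f) \<Rightarrow> ('x \<Rightarrow> 'x \<Rightarrow> 'x)
    \<Rightarrow> ('f \<Rightarrow> 'e::ab_group_add \<Rightarrow> 'e) \<Rightarrow> ('e \<Rightarrow> 'e \<Rightarrow> 'f) \<Rightarrow> ('e \<Rightarrow> 'x) \<Rightarrow> ('e \<Rightarrow> 'e \<Rightarrow> 'e)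
    \<Rightarrow> ('f \<Rightarrow> 'e) \<Rightarrow> ('e \<Rightarrow> 'e) \<Rightarrow> bool" where
  "para_hermitian_algebroid smX act lie smE ip rho cb D JE \<longleftrightarrow>
     courant_algebroid smX act lie smE ip rho cb D \<and>
     fun_linear smE smE JE \<and>
     (\<forall>e. JE (JE e) = e) \<and>
     (\<forall>e1 e2. ip (JE e1) (JE e2) = - ip e1 e2) \<and>
     (\<forall>e1 e2. JE e1 = e1 \<and> JE e2 = e2 \<longrightarrow> JE (cb e1 e2) = cb e1 e2) \<and>
     (\<forall>e1 e2. JE e1 = - e1 \<and> JE e2 = - e2 \<longrightarrow> JE (cb e1 e2) = - cb e1 e2)"

definition connection ::
  "('f::comm_ring_1 \<Rightarrow> 'x::ab_group_add \<Rightarrow> 'x) \<Rightarrow> ('f \<Rightarrow> 'e::ab_group_add \<Rightarrow> 'e)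
    \<Rightarrow> ('e \<Rightarrow> 'e \<Rightarrow> 'f) \<Rightarrow> ('e \<Rightarrow> 'x) \<Rightarrow> ('x \<Rightarrow> 'e) \<Rightarrow> bool" where
  "connection smX smE ip rho A \<longleftrightarrow>
     fun_linear smX smE A \<and> (\<forall>v. rho (A v) = v) \<and> (\<forall>v w. ip (A v) (A w) = 0)"

definition flat_connection ::
  "('x \<Rightarrow> 'x \<Rightarrow> 'x) \<Rightarrow> ('e \<Rightarrow> 'e \<Rightarrow> 'e) \<Rightarrow> ('x \<Rightarrow> 'e) \<Rightarrow> bool" where
  "flat_connection lie cb A \<longleftrightarrow> (\<forall>v w. cb (A v) (A w) = A (lie v w))"

definition para_complex_connection ::
  "('e \<Rightarrow> 'e) \<Rightarrow> ('x \<Rightarrow> 'x) \<Rightarrow> ('x \<Rightarrow> 'e) \<Rightarrow> bool" where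
  "para_complex_connection JE J A \<longleftrightarrow> (\<forall>v. JE (A v) = A (J v))"

end

theory Submission
  imports Defs HOL.Modules
begin

text \<open>A flat para-complex connection A is a bracket homomorphism
  (Gamma(TM), Lie bracket) \<rightarrow> (Gamma(E), Courant bracket) intertwining J_TM with J_E, and it is injective since
  rho is a left inverse.
  Hence each eigenbundle of J_TM is the preimage under A of the corresponding eigenbundle
  of J_E, and the preimage of a bracket-closed set under a bracket homomorphism is
  bracket-closed.\<close>

definition bracket_closed :: "'a set \<Rightarrow> ('a \<Rightarrow> 'a \<Rightarrow> 'a) \<Rightarrow> bool" where
  "bracket_closed S br \<longleftrightarrow> (\<forall>u\<in>S. \<forall>v\<in>S. br u v \<in> S)"

lemma bracket_closed_vimage:
  assumes "bracket_closed S' br'"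
    and "\<And>u v. br' (h u) (h v) = h (br u v)"
  shows "bracket_closed (h -` S') br"
  using assms unfolding bracket_closed_def by (metis vimage_eq)

lemma fun_linear_additive: "fun_linear smV smW L \<Longrightarrow> additive L"
  unfolding fun_linear_def by (simp add: additive_def)

lemma connection_inj: "connection smX smE ip rho A \<Longrightarrow> inj A"
  unfolding connection_def by (metis injI)

lemma eigenspaces_vimage:
  assumes "inj A" and "additive A" and "\<And>v. JE (A v) = A (J v)"
  shows "A -` {e. JE e = e} = {v. J v = v}"
    and "A -` {e. JE e = - e} = {v. J v = - v}"
proof -
  have minus: "- A v = A (- v)" for v using assms(2) by (simp add: additive.minus)
  show "A -` {e. JE e = e} = {v. J v = v}"
    using assms(1) by (simp add: assms(3) inj_eq)
  show "A -` {e. JE e = - e} = {v. J v = - v}"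
    using assms(1) by (simp add: assms(3) minus inj_eq)
qed

lemma para_hermitian_manifold_iff:
  "para_hermitian_manifold smX act lie g J \<longleftrightarrow>
     almost_para_hermitian_manifold smX act lie g J \<and>
     bracket_closed {X. J X = X} lie \<and> bracket_closed {X. J X = - X} lie"
  unfolding para_hermitian_manifold_def bracket_closed_def by auto

lemma para_hermitian_algebroid_eigenbundles_closed:
  assumes "para_hermitian_algebroid smX act lie smE ip rho cb D JE"
  shows "bracket_closed {e. JE e = e} cb" and "bracket_closed {e. JE e = - e} cb"
  using assms unfolding para_hermitian_algebroid_def bracket_closed_def by auto

theorem mainTheorem3:
  fixes smX :: "'f::comm_ring_1 \<Rightarrow> 'x::ab_group_add \<Rightarrow> 'x"
    and act :: "'x \<Rightarrow> 'f \<Rightarrow> 'f" and lie :: "'x \<Rightarrow> 'x \<Rightarrow> 'x"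
    and g :: "'x \<Rightarrow> 'x \<Rightarrow> 'f" and J :: "'x \<Rightarrow> 'x"
    and smE :: "'f \<Rightarrow> 'e::ab_group_add \<Rightarrow> 'e" and ip :: "'e \<Rightarrow> 'e \<Rightarrow> 'f"
    and rho :: "'e \<Rightarrow> 'x" and cb :: "'e \<Rightarrow> 'e \<Rightarrow> 'e" and D :: "'f \<Rightarrow> 'e"
    and JE :: "'e \<Rightarrow> 'e" and A :: "'x \<Rightarrow> 'e"
  assumes "almost_para_hermitian_manifold smX act lie g J"
    and "para_hermitian_algebroid smX act lie smE ip rho cb D JE"
    and "connection smX smE ip rho A"
    and "flat_connection lie cb A"
    and "para_complex_connection JE J A"
  shows "para_hermitian_manifold smX act lie g J"
proof -
  have hom: "\<And>v w. cb (A v) (A w) = A (lie v w)"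
    using assms(4) unfolding flat_connection_def by blast
  have inj: "inj A" using assms(3) by (rule connection_inj)
  have add: "additive A" using assms(3) unfolding connection_def by (blast intro: fun_linear_additive)
  have J: "\<And>v. JE (A v) = A (J v)"
    using assms(5) unfolding para_complex_connection_def by blast
  note closed_E = para_hermitian_algebroid_eigenbundles_closed[OF assms(2)]
  have "bracket_closed (A -` {e. JE e = e}) lie"
    using closed_E(1) hom by (rule bracket_closed_vimage)
  moreover have "bracket_closed (A -` {e. JE e = - e}) lie"
    using closed_E(2) hom by (rule bracket_closed_vimage)
  ultimately show ?thesis
    using assms(1) eigenspaces_vimage[where JE = JE and J = J, OF inj add J]
    by (simp add: para_hermitian_manifold_iff)
qed

end
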